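(* Let $(X,d)$ be a finite metric space with $n$ points, doubling dimension $\dim$, and all inter-point distances greater than $1$; let $1\le k\le n-2$ be an integer, $0<\varepsilon\le\frac13$, $v\in X$, and let $Q$ and $H_Q$ be as constructed in the context. Then $H_Q$ is a $(k,1+3\varepsilon,v)$-vertex-fault-tolerant single-sink spanner for $Q\cup\{v\}$, i.e. for every $S\subseteq Q$ with $|S|\le k$ and every $x\in Q\setminus S$ we have $d_{H_Q\setminus S}(v,x)\le(1+3\varepsilon)d(v,x)$; moreover $H_Q$ has maximum degree $O(\Gamma k)$ and hop-diameter $O(\log n)$ (every $x\in Q$ is joined to $v$ in $H_Q$ by a path of length at most $(1+3\varepsilon)d(v,x)$ with $O(\log n)$ edges).
   Context: The doubling dimension $\dim$ is the smallest $\rho$ such that every ball can be covered by $2^\rho$ balls of half the radius. $B(x,r)=\{y: d(x,y)\le r\}$. A set $Y$ is an $r$-net of a set $U$ if $Y\subseteq U$, every point of $U$ is within distance $r$ of some point of $Y$, and distinct points of $Y$ are at distance $>r$. Let $\Delta=\max_{x,y}d(x,y)$, $\ell=\lceil\log_{1/\varepsilon}\Delta\rceil$, $r_0=1$ and $r_i=\varepsilon^{-i}$ for $i\in\{1,\dots,\ell\}$. Rings: $R_0=\{v\}$ and $R_i=B(v,r_i)\setminus B(v,r_{i-1})$ for $1\le i\le\ell$. For each $i\ge1$ let $N_i$ be an $\varepsilon r_{i-1}$-net of $R_i$, and let $\Gamma=\lceil\varepsilon^{-4\dim}\rceil$. For each $y\in N_i$ the cluster $C_y$ consists of the points $x\in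 R_i$ whose closest point in $N_i$ is $y$ (ties broken arbitrarily). For each such $y$ choose an arbitrary set of portals $Q_y\subseteq C_y$ with $|Q_y|=\min(k+1,|C_y|)$, and let $Q=\bigcup_{i\ge1}\bigcup_{y\in N_i}Q_y$. Write $Q=\{q_1,\dots,q_m\}$ with $d(v,q_1)\le\cdots\le d(v,q_m)$. For $j\ge1$ let $A_j=\{q_l: (j-1)(k+1)+1\le l\le j(k+1)\}$, let $A_0=\{v\}$ and $A_i=A_0$ for $i<0$. $H_Q$ is the graph on $Q\cup\{v\}$ obtained by, for every $j\ge1$ with $A_j\neq\emptyset$, adding an edge between every point of $A_j$ and every point of $A_{\lceil (j-2\Gamma-1)/2\rceil}$; edge weights are distances $d$. $H\setminus S$ denotes $H$ with vertices of $S$ removed. Implicit constants in $O(\cdot)$ are absolute. *)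

theory Defs
  imports "HOL-Analysis.Analysis"
begin

text \<open>Finite metric spaces are represented by a finite carrier X of natural numbers
  together with a distance function d (every finite metric space is isometric to one
  of this form).\<close>

definition metric_on :: "nat set \<Rightarrow> (nat \<Rightarrow> nat \<Rightarrow> real) \<Rightarrow> bool" where
  "metric_on X d \<longleftrightarrow>
     (\<forall>x\<in>X. \<forall>y\<in>X. d x y \<ge> 0 \<and> (d x y = 0 \<longleftrightarrow> x = y) \<and> d x y = d y x) \<and>
     (\<forall>x\<in>X. \<forall>y\<in>X. \<forall>z\<in>X. d x z \<le> d x y + d y z)"

definition ball_in :: "nat set \<Rightarrow> (nat \<Rightarrow> nat \<Rightarrow> real) \<Rightarrow> nat \<Rightarrow> real \<Rightarrow> nat set" where
  "ball_in X d x r = {y\<in>X. d x y \<le> r}"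

definition doubling_dim :: "nat set \<Rightarrow> (nat \<Rightarrow> nat \<Rightarrow> real) \<Rightarrow> real" where
  "doubling_dim X d = Inf {\<rho>::real. \<forall>x\<in>X. \<forall>r. \<exists>C\<subseteq>X.
       real (card C) \<le> 2 powr \<rho> \<and> ball_in X d x r \<subseteq> (\<Union>c\<in>C. ball_in X d c (r/2))}"

definition diam :: "nat set \<Rightarrow> (nat \<Rightarrow> nat \<Rightarrow> real) \<Rightarrow> real" where
  "diam X d = Max {d x y | x y. x \<in> X \<and> y \<in> X}"

definition lev :: "nat set \<Rightarrow> (nat \<Rightarrow> nat \<Rightarrow> real) \<Rightarrow> real \<Rightarrow> nat" where
  "lev X d \<epsilon> = nat \<lceil>log (1/\<epsilon>) (diam X d)\<rceil>"

definition rad :: "real \<Rightarrow> nat \<Rightarrow> real" where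
  "rad \<epsilon> i = (1/\<epsilon>) ^ i"

definition ring :: "nat set \<Rightarrow> (nat \<Rightarrow> nat \<Rightarrow> real) \<Rightarrow> real \<Rightarrow> nat \<Rightarrow> nat \<Rightarrow> nat set" where
  "ring X d \<epsilon> v i = (if i = 0 then {v}
      else ball_in X d v (rad \<epsilon> i) - ball_in X d v (rad \<epsilon> (i - 1)))"

definition is_net :: "(nat \<Rightarrow> nat \<Rightarrow> real) \<Rightarrow> real \<Rightarrow> nat set \<Rightarrow> nat set \<Rightarrow> bool" where
  "is_net d r Y U \<longleftrightarrow> Y \<subseteq> U \<and> (\<forall>u\<in>U. \<exists>y\<in>Y. d u y \<le> r) \<and>
     (\<forall>y1\<in>Y. \<forall>y2\<in>Y. y1 \<noteq> y2 \<longrightarrow> d y1 y2 > r)"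

text \<open>cl i x is the chosen closest net point of N_i to x (ties broken arbitrarily);
  the cluster C_y of y in N_i.\<close>
definition cluster :: "nat set \<Rightarrow> (nat \<Rightarrow> nat \<Rightarrow> real) \<Rightarrow> real \<Rightarrow> nat \<Rightarrow>
    (nat \<Rightarrow> nat \<Rightarrow> nat) \<Rightarrow> nat \<Rightarrow> nat \<Rightarrow> nat set" where
  "cluster X d \<epsilon> v cl i y = {x \<in> ring X d \<epsilon> v i. cl i x = y}"

definition portal_set :: "nat set \<Rightarrow> (nat \<Rightarrow> nat \<Rightarrow> real) \<Rightarrow> real \<Rightarrow>
    (nat \<Rightarrow> nat set) \<Rightarrow> (nat \<Rightarrow> nat \<Rightarrow> nat set) \<Rightarrow> nat set" where
  "portal_set X d \<epsilon> N P = (\<Union>i\<in>{1..lev X d \<epsilon>}. \<Union>y\<in>N i. P i y)"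

text \<open>All choices in the construction: nets N, closest-point assignment cl, portals P,
  and the enumeration q_1,...,q_m of Q sorted by distance from v.\<close>
definition valid_construction :: "nat set \<Rightarrow> (nat \<Rightarrow> nat \<Rightarrow> real) \<Rightarrow> nat \<Rightarrow> real \<Rightarrow> nat \<Rightarrow>
    (nat \<Rightarrow> nat set) \<Rightarrow> (nat \<Rightarrow> nat \<Rightarrow> nat) \<Rightarrow> (nat \<Rightarrow> nat \<Rightarrow> nat set) \<Rightarrow> (nat \<Rightarrow> nat) \<Rightarrow> bool" where
  "valid_construction X d k \<epsilon> v N cl P q \<longleftrightarrow>
     (\<forall>i\<in>{1..lev X d \<epsilon>}. is_net d (\<epsilon> * rad \<epsilon> (i - 1)) (N i) (ring X d \<epsilon> v i)) \<and>
     (\<forall>i\<in>{1..lev X d \<epsilon>}. \<forall>x\<in>ring X d \<epsilon> v i.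
         cl i x \<in> N i \<and> (\<forall>y\<in>N i. d x (cl i x) \<le> d x y)) \<and>
     (\<forall>i\<in>{1..lev X d \<epsilon>}. \<forall>y\<in>N i.
         P i y \<subseteq> cluster X d \<epsilon> v cl i y \<and>
         card (P i y) = min (k + 1) (card (cluster X d \<epsilon> v cl i y))) \<and>
     bij_betw q {1..card (portal_set X d \<epsilon> N P)} (portal_set X d \<epsilon> N P) \<and>
     (\<forall>a b. 1 \<le> a \<longrightarrow> a \<le> b \<longrightarrow> b \<le> card (portal_set X d \<epsilon> N P) \<longrightarrow> d v (q a) \<le> d v (q b))"

definition Gamma :: "nat set \<Rightarrow> (nat \<Rightarrow> nat \<Rightarrow> real) \<Rightarrow> real \<Rightarrow> int" where
  "Gamma X d \<epsilon> = \<lceil>\<epsilon> powr (- 4 * doubling_dim X d)\<rceil>"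

definition Aset :: "nat set \<Rightarrow> (nat \<Rightarrow> nat) \<Rightarrow> nat \<Rightarrow> nat \<Rightarrow> int \<Rightarrow> nat set" where
  "Aset Q q k v j = (if j \<le> 0 then {v} else
     {q l | l. (j - 1) * (int k + 1) + 1 \<le> int l \<and> int l \<le> j * (int k + 1) \<and> 1 \<le> l \<and> l \<le> card Q})"

definition HQ_edges :: "nat set \<Rightarrow> (nat \<Rightarrow> nat) \<Rightarrow> nat \<Rightarrow> int \<Rightarrow> nat \<Rightarrow> nat set set" where
  "HQ_edges Q q k \<Gamma> v = {{a, b} | a b j. j \<ge> 1 \<and> Aset Q q k v j \<noteq> {} \<and>
      a \<in> Aset Q q k v j \<and> b \<in> Aset Q q k v \<lceil>real_of_int (j - 2 * \<Gamma> - 1) / 2\<rceil>}"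

definition is_path :: "nat set \<Rightarrow> nat set set \<Rightarrow> nat list \<Rightarrow> nat \<Rightarrow> nat \<Rightarrow> bool" where
  "is_path V E p a b \<longleftrightarrow> p \<noteq> [] \<and> hd p = a \<and> last p = b \<and> distinct p \<and> set p \<subseteq> V \<and>
     (\<forall>i. Suc i < length p \<longrightarrow> {p ! i, p ! Suc i} \<in> E)"

definition path_weight :: "(nat \<Rightarrow> nat \<Rightarrow> real) \<Rightarrow> nat list \<Rightarrow> real" where
  "path_weight d p = (\<Sum>i<length p - 1. d (p ! i) (p ! Suc i))"

text \<open>Shortest-path distance (infinity if no path).\<close>
definition graph_dist :: "nat set \<Rightarrow> nat set set \<Rightarrow> (nat \<Rightarrow> nat \<Rightarrow> real) \<Rightarrow> nat \<Rightarrow> nat \<Rightarrow> ereal" where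
  "graph_dist V E d a b = (INF p\<in>{p. is_path V E p a b}. ereal (path_weight d p))"

definition del_vertices_V :: "nat set \<Rightarrow> nat set \<Rightarrow> nat set" where
  "del_vertices_V V S = V - S"
definition del_vertices_E :: "nat set set \<Rightarrow> nat set \<Rightarrow> nat set set" where
  "del_vertices_E E S = {e\<in>E. e \<inter> S = {}}"

definition degree :: "nat set set \<Rightarrow> nat \<Rightarrow> nat" where
  "degree E u = card {w. {u, w} \<in> E}"

end

theory Submission
  imports Defs
begin

text \<open>Enumerate the portals by distance from the sink v and cut the enumeration into groups
  A_j of k + 1 consecutive portals. The packing property of the doubling dimension bounds
  every net N_i by \<Gamma>, so a distance window (\<epsilon> r_(i-1), r_i], which meets at most two
  rings, contains at most 2\<Gamma>(k + 1) portals. Hence every portal of the parent group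
  A_(\<lceil>(j - 2\<Gamma> - 1)/2\<rceil>) is at most \<epsilon> times as far from v as any portal of A_j.
  Since a fault set S of size at most k cannot remove all k + 1 portals of the parent group,
  induction along the enumeration yields a path avoiding S of stretch 1 + 3\<epsilon> in which
  the group index at least halves at every step, hence with O(log n) edges. A group is
  joined only to its parent and to at most two child groups, which bounds the degree.\<close>

lemma path_weight_snoc:
  assumes "p \<noteq> []"
  shows "path_weight d (p @ [x]) = path_weight d p + d (last p) x"
proof -
  obtain n where n: "length p = Suc n" using assms by (cases p) auto
  have "(\<Sum>i<n. d ((p @ [x]) ! i) ((p @ [x]) ! Suc i)) = (\<Sum>i<n. d (p ! i) (p ! Suc i))"
    by (rule sum.cong) (use n in \<open>auto simp: nth_append\<close>)
  moreover have "(p @ [x]) ! n = last p" "(p @ [x]) ! Suc n = x"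
    using n assms by (simp_all add: nth_append last_conv_nth)
  ultimately show ?thesis
    unfolding path_weight_def using n by simp
qed

lemma is_path_singleton: "a \<in> V \<Longrightarrow> is_path V E [a] a a"
  unfolding is_path_def by auto

lemma is_path_snoc:
  assumes "is_path V E p a b" and "x \<in> V" and "x \<notin> set p" and "{b, x} \<in> E"
  shows "is_path V E (p @ [x]) a x"
proof -
  have p: "p \<noteq> []" "last p = b" "\<And>i. Suc i < length p \<Longrightarrow> {p ! i, p ! Suc i} \<in> E"
    using assms(1) unfolding is_path_def by auto
  have "{(p @ [x]) ! i, (p @ [x]) ! Suc i} \<in> E" if "Suc i < length (p @ [x])" for i
  proof (cases "Suc i < length p")
    case True
    then show ?thesis using p(3) by (simp add: nth_append)
  next
    case False
    then have "i = length p - 1" using that by simp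
    then show ?thesis using p(1,2) assms(4) by (simp add: nth_append last_conv_nth)
  qed
  then show ?thesis using assms(1-3) unfolding is_path_def by auto
qed

lemma graph_dist_le_path_weight:
  "is_path V E p a b \<Longrightarrow> graph_dist V E d a b \<le> ereal (path_weight d p)"
  unfolding graph_dist_def by (rule INF_lower) simp

lemma ex_power_of_two_between:
  fixes b :: real
  assumes "3 \<le> b"
  shows "\<exists>t::nat. 2 * b\<^sup>2 \<le> 2 ^ t \<and> 2 ^ t \<le> b ^ 4"
proof -
  have ex: "\<exists>t. 2 * b\<^sup>2 \<le> (2::real) ^ t"
    using real_arch_pow[of 2 "2 * b\<^sup>2"] by (auto intro: less_imp_le)
  define t where "t = (LEAST t. 2 * b\<^sup>2 \<le> (2::real) ^ t)"
  have lower: "2 * b\<^sup>2 \<le> (2::real) ^ t"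
    unfolding t_def by (rule LeastI_ex[OF ex])
  have b9: "9 \<le> b\<^sup>2"
    using power_mono[OF assms, of 2] by simp
  then have "t \<noteq> 0" using lower by (intro notI) simp
  then have "\<not> 2 * b\<^sup>2 \<le> (2::real) ^ (t - 1)"
    unfolding t_def by (intro not_less_Least) (simp add: t_def[symmetric])
  moreover have "(2::real) ^ t = 2 * 2 ^ (t - 1)"
    using \<open>t \<noteq> 0\<close> by (cases t) auto
  ultimately have "(2::real) ^ t \<le> 4 * b\<^sup>2" by simp
  also have "\<dots> \<le> b\<^sup>2 * b\<^sup>2"
    using b9 by (intro mult_right_mono) auto
  also have "\<dots> = b ^ 4"
    by algebra
  finally show ?thesis using lower by blast
qed

lemma le_three_ln_if_two_power_le:
  fixes a n :: nat
  assumes "2 ^ a \<le> 2 * n" and "3 \<le> n"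
  shows "real a \<le> 3 * ln (real n)"
proof -
  have pow: "(2::real) ^ a \<le> 2 * real n"
    using of_nat_le_iff[THEN iffD2, OF assms(1)] by simp
  have "real a = log 2 (2 ^ a)" by (simp add: log_nat_power)
  also have "\<dots> \<le> log 2 (2 * real n)"
    using pow assms(2) by (subst log_le_cancel_iff) auto
  also have "\<dots> = 1 + log 2 (real n)"
    using assms(2) by (simp add: log_mult)
  also have "\<dots> = 1 + ln (real n) / ln 2"
    by (simp add: log_def)
  also have "\<dots> \<le> 1 + 2 * ln (real n)"
    using ln2_ge_two_thirds assms(2) by (simp add: field_simps)
  also have "\<dots> \<le> 3 * ln (real n)"
    using assms(2) exp_le by (simp add: ln_ge_iff)
  finally show ?thesis .
qed

lemma stretch_after_step:
  fixes \<epsilon> w a b c :: real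
  assumes "0 \<le> \<epsilon>" and "\<epsilon> \<le> 1/3" and "0 \<le> b"
    and "w \<le> (1 + 3 * \<epsilon>) * a" and "c \<le> a + b" and "a \<le> \<epsilon> * b"
  shows "w + c \<le> (1 + 3 * \<epsilon>) * b"
proof -
  have "w + c \<le> (2 + 3 * \<epsilon>) * a + b" using assms(4,5) by (simp add: algebra_simps)
  also have "\<dots> \<le> (2 + 3 * \<epsilon>) * (\<epsilon> * b) + b"
    using assms(1,6) by (intro add_right_mono mult_left_mono) auto
  also have "\<dots> = (1 + 3 * \<epsilon>) * b - \<epsilon> * (1 - 3 * \<epsilon>) * b"
    by (simp add: algebra_simps)
  also have "\<dots> \<le> (1 + 3 * \<epsilon>) * b"
    using assms(1-3) by simp
  finally show ?thesis .
qed

section \<open>Packing in spaces of bounded doubling dimension\<close>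

locale finite_metric =
  fixes X :: "nat set" and d :: "nat \<Rightarrow> nat \<Rightarrow> real"
  assumes finite_X: "finite X" and metric: "metric_on X d"
begin

lemma dist_nonneg: "x \<in> X \<Longrightarrow> y \<in> X \<Longrightarrow> 0 \<le> d x y"
  using metric unfolding metric_on_def by blast

lemma dist_eq_0_iff: "x \<in> X \<Longrightarrow> y \<in> X \<Longrightarrow> d x y = 0 \<longleftrightarrow> x = y"
  using metric unfolding metric_on_def by blast

lemma dist_commute: "x \<in> X \<Longrightarrow> y \<in> X \<Longrightarrow> d x y = d y x"
  using metric unfolding metric_on_def by blast

lemma dist_triangle: "x \<in> X \<Longrightarrow> y \<in> X \<Longrightarrow> z \<in> X \<Longrightarrow> d x z \<le> d x y + d y z"
  using metric unfolding metric_on_def by blast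

definition doubling_exponents :: "real set" where
  "doubling_exponents = {\<rho>. \<forall>x\<in>X. \<forall>r. \<exists>C\<subseteq>X.
     real (card C) \<le> 2 powr \<rho> \<and> ball_in X d x r \<subseteq> (\<Union>c\<in>C. ball_in X d c (r/2))}"

lemma doubling_dim_eq_Inf: "doubling_dim X d = Inf doubling_exponents"
  unfolding doubling_dim_def doubling_exponents_def ..

lemma log_card_in_doubling_exponents:
  assumes "X \<noteq> {}"
  shows "log 2 (card X) \<in> doubling_exponents"
proof -
  have "ball_in X d x r \<subseteq> (\<Union>c\<in>X. ball_in X d c (r/2))" if "x \<in> X" for x r
  proof
    fix y assume "y \<in> ball_in X d x r"
    then have "y \<in> X" "0 \<le> r"
      using dist_nonneg[OF that] unfolding ball_in_def by force+
    then have "y \<in> ball_in X d y (r/2)"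
      using dist_eq_0_iff[of y y] unfolding ball_in_def by simp
    then show "y \<in> (\<Union>c\<in>X. ball_in X d c (r/2))"
      using \<open>y \<in> X\<close> by blast
  qed
  moreover have "card X > 0" using assms finite_X by (simp add: card_gt_0_iff)
  ultimately show ?thesis unfolding doubling_exponents_def by fastforce
qed

lemma doubling_exponent_nonneg:
  assumes "X \<noteq> {}" and "\<rho> \<in> doubling_exponents"
  shows "0 \<le> \<rho>"
proof -
  obtain x where x: "x \<in> X" using assms(1) by blast
  then obtain C where C: "C \<subseteq> X" "real (card C) \<le> 2 powr \<rho>"
      "ball_in X d x 0 \<subseteq> (\<Union>c\<in>C. ball_in X d c (0/2))"
    using assms(2) unfolding doubling_exponents_def by blast
  have "x \<in> ball_in X d x 0" using x dist_eq_0_iff[of x x] unfolding ball_in_def by simp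
  then have "C \<noteq> {}" using C(3) by blast
  moreover have "finite C" using C(1) finite_X finite_subset by blast
  ultimately have one_le: "1 \<le> 2 powr \<rho>" using C(2) card_gt_0_iff[of C] by linarith
  show ?thesis
  proof (rule ccontr)
    assume "\<not> 0 \<le> \<rho>"
    then have "2 powr \<rho> < 2 powr 0" by (intro powr_less_mono) auto
    then show False using one_le by simp
  qed
qed

lemma doubling_dim_nonneg: "X \<noteq> {} \<Longrightarrow> 0 \<le> doubling_dim X d"
  unfolding doubling_dim_eq_Inf
  using log_card_in_doubling_exponents doubling_exponent_nonneg
  by (intro cInf_greatest) auto

lemma ball_covered_by_shrunk_balls:
  assumes "\<rho> \<in> doubling_exponents" and "x \<in> X"
  shows "\<exists>C\<subseteq>X. real (card C) \<le> (2 powr \<rho>) ^ t \<and>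
           ball_in X d x r \<subseteq> (\<Union>c\<in>C. ball_in X d c (r / 2 ^ t))"
proof (induction t)
  case 0
  then show ?case using assms(2) by (intro exI[of _ "{x}"]) auto
next
  case (Suc t)
  then obtain C where C: "C \<subseteq> X" "real (card C) \<le> (2 powr \<rho>) ^ t"
      "ball_in X d x r \<subseteq> (\<Union>c\<in>C. ball_in X d c (r / 2 ^ t))" by blast
  have "\<forall>c\<in>C. \<exists>D\<subseteq>X. real (card D) \<le> 2 powr \<rho> \<and>
      ball_in X d c (r / 2 ^ t) \<subseteq> (\<Union>c'\<in>D. ball_in X d c' (r / 2 ^ t / 2))"
    using assms(1) C(1) unfolding doubling_exponents_def by blast
  then obtain D where D: "\<forall>c\<in>C. D c \<subseteq> X \<and> real (card (D c)) \<le> 2 powr \<rho> \<and>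
      ball_in X d c (r / 2 ^ t) \<subseteq> (\<Union>c'\<in>D c. ball_in X d c' (r / 2 ^ t / 2))"
    by (rule bchoice[elim_format]) blast
  have "finite C" using C(1) finite_X finite_subset by blast
  then have "real (card (\<Union>c\<in>C. D c)) \<le> (\<Sum>c\<in>C. real (card (D c)))"
    using card_UN_le[of C D] by (simp flip: of_nat_sum)
  also have "\<dots> \<le> real (card C) * 2 powr \<rho>"
    using sum_mono[of C "\<lambda>c. real (card (D c))" "\<lambda>_. 2 powr \<rho>"] D by simp
  also have "\<dots> \<le> (2 powr \<rho>) ^ Suc t"
    using C(2) by (simp add: mult_right_mono mult.commute)
  finally have "real (card (\<Union>c\<in>C. D c)) \<le> (2 powr \<rho>) ^ Suc t" .
  moreover have "ball_in X d x r \<subseteq> (\<Union>c\<in>(\<Union>c\<in>C. D c). ball_in X d c (r / 2 ^ Suc t))"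
  proof
    fix y assume "y \<in> ball_in X d x r"
    then obtain c where c: "c \<in> C" "y \<in> ball_in X d c (r / 2 ^ t)" using C(3) by blast
    then obtain c' where "c' \<in> D c" "y \<in> ball_in X d c' (r / 2 ^ t / 2)" using D by blast
    then show "y \<in> (\<Union>c\<in>(\<Union>c\<in>C. D c). ball_in X d c (r / 2 ^ Suc t))"
      using c(1) by (auto simp: mult.commute)
  qed
  moreover have "(\<Union>c\<in>C. D c) \<subseteq> X" using D by blast
  ultimately show ?case by blast
qed

lemma card_separated_le:
  assumes "\<rho> \<in> doubling_exponents" and "x \<in> X" and "Y \<subseteq> ball_in X d x R"
    and "\<forall>y1\<in>Y. \<forall>y2\<in>Y. y1 \<noteq> y2 \<longrightarrow> s < d y1 y2" and "2 * R / 2 ^ t \<le> s"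
  shows "real (card Y) \<le> 2 powr (real t * \<rho>)"
proof -
  obtain C where C: "C \<subseteq> X" "real (card C) \<le> (2 powr \<rho>) ^ t"
      "ball_in X d x R \<subseteq> (\<Union>c\<in>C. ball_in X d c (R / 2 ^ t))"
    using ball_covered_by_shrunk_balls[OF assms(1,2), of t R] by blast
  define f where "f y = (SOME c. c \<in> C \<and> y \<in> ball_in X d c (R / 2 ^ t))" for y
  have f: "f y \<in> C \<and> y \<in> ball_in X d (f y) (R / 2 ^ t)" if "y \<in> Y" for y
  proof -
    have "\<exists>c. c \<in> C \<and> y \<in> ball_in X d c (R / 2 ^ t)" using that assms(3) C(3) by blast
    then show ?thesis unfolding f_def by (rule someI_ex)
  qed
  have "inj_on f Y"
  proof (rule inj_onI, rule ccontr)
    fix y1 y2 assume y: "y1 \<in> Y" "y2 \<in> Y" "f y1 = f y2" "y1 \<noteq> y2"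
    have X: "y1 \<in> X" "y2 \<in> X" "f y1 \<in> X"
      using y(1,2) f[OF y(1)] C(1) assms(3) unfolding ball_in_def by auto
    have "d y1 (f y1) \<le> R / 2 ^ t" "d (f y1) y2 \<le> R / 2 ^ t"
      using f[OF y(1)] f[OF y(2)] y(3) dist_commute[OF X(1,3)] unfolding ball_in_def by auto
    then have "d y1 y2 \<le> 2 * R / 2 ^ t"
      using dist_triangle[OF X(1,3,2)] by simp
    moreover have "s < d y1 y2" using assms(4) y(1,2,4) by blast
    ultimately show False using assms(5) by simp
  qed
  moreover have "f ` Y \<subseteq> C" using f by blast
  moreover have "finite C" using C(1) finite_X finite_subset by blast
  ultimately have "card Y \<le> card C" by (rule card_inj_on_le)
  moreover have "(2 powr \<rho>) ^ t = 2 powr (real t * \<rho>)" by (rule powr_power) simp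
  ultimately show ?thesis using C(2) by simp
qed

lemma card_separated_le_doubling_dim:
  assumes "x \<in> X" and "Y \<subseteq> ball_in X d x R"
    and "\<forall>y1\<in>Y. \<forall>y2\<in>Y. y1 \<noteq> y2 \<longrightarrow> s < d y1 y2" and "2 * R / 2 ^ t \<le> s"
  shows "real (card Y) \<le> 2 powr (real t * doubling_dim X d)"
proof (cases "Y = {}")
  case False
  have "finite Y" using assms(2) finite_X unfolding ball_in_def by (auto intro: finite_subset)
  then have cY: "0 < real (card Y)" using False by (simp add: card_gt_0_iff)
  have bound: "log 2 (card Y) \<le> real t * \<rho>" if "\<rho> \<in> doubling_exponents" for \<rho>
    using card_separated_le[OF that assms] cY by (simp add: log_le_iff)
  have ne: "doubling_exponents \<noteq> {}" using log_card_in_doubling_exponents assms(1) by blast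
  have "log 2 (card Y) \<le> real t * doubling_dim X d"
  proof (cases "t = 0")
    case True
    then show ?thesis using bound ne by auto
  next
    case False
    then have "log 2 (card Y) / real t \<le> doubling_dim X d"
      unfolding doubling_dim_eq_Inf using bound ne
      by (intro cInf_greatest) (auto simp: divide_le_eq mult.commute)
    then show ?thesis using False by (simp add: divide_le_eq mult.commute)
  qed
  then have "2 powr log 2 (card Y) \<le> 2 powr (real t * doubling_dim X d)"
    by (rule powr_mono) simp
  then show ?thesis using cY by simp
qed simp

end

section \<open>Rings, nets and portals\<close>

locale portal_construction = finite_metric +
  fixes k :: nat and \<epsilon> :: real and v :: nat
    and N :: "nat \<Rightarrow> nat set" and cl :: "nat \<Rightarrow> nat \<Rightarrow> nat" and P :: "nat \<Rightarrow> nat \<Rightarrow> nat set"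
    and q :: "nat \<Rightarrow> nat"
  assumes v_in_X: "v \<in> X" and eps_pos: "0 < \<epsilon>" and eps_le: "\<epsilon> \<le> 1/3"
    and valid: "valid_construction X d k \<epsilon> v N cl P q"
begin

abbreviation "Q \<equiv> portal_set X d \<epsilon> N P"
abbreviation "m \<equiv> card Q"
abbreviation "L \<equiv> lev X d \<epsilon>"
abbreviation "\<Gamma> \<equiv> Gamma X d \<epsilon>"

lemma rad_Suc: "rad \<epsilon> (Suc i) = rad \<epsilon> i / \<epsilon>"
  unfolding rad_def by simp

lemma one_le_rad: "1 \<le> rad \<epsilon> i"
  unfolding rad_def using eps_pos eps_le by (intro one_le_power) (simp add: field_simps)

lemma rad_less_rad_iff: "rad \<epsilon> a < rad \<epsilon> b \<longleftrightarrow> a < b"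
  unfolding rad_def using eps_pos eps_le by (intro power_strict_increasing_iff) (simp add: field_simps)

lemma is_net_ring: "i \<in> {1..L} \<Longrightarrow> is_net d (\<epsilon> * rad \<epsilon> (i - 1)) (N i) (ring X d \<epsilon> v i)"
  using valid unfolding valid_construction_def by blast

lemma portals_in_cluster:
  "i \<in> {1..L} \<Longrightarrow> y \<in> N i \<Longrightarrow>
     P i y \<subseteq> cluster X d \<epsilon> v cl i y \<and> card (P i y) = min (k + 1) (card (cluster X d \<epsilon> v cl i y))"
  using valid unfolding valid_construction_def by blast

lemma q_bij: "bij_betw q {1..m} Q"
  using valid unfolding valid_construction_def by blast

lemma q_mono: "1 \<le> a \<Longrightarrow> a \<le> b \<Longrightarrow> b \<le> m \<Longrightarrow> d v (q a) \<le> d v (q b)"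
  using valid unfolding valid_construction_def by blast

lemma q_in_portal_set: "1 \<le> l \<Longrightarrow> l \<le> m \<Longrightarrow> q l \<in> Q"
  using q_bij unfolding bij_betw_def by auto

lemma inj_on_q: "inj_on q {1..m}"
  using q_bij unfolding bij_betw_def by simp

lemma portal_setE:
  assumes "z \<in> Q"
  obtains l where "1 \<le> l" and "l \<le> m" and "z = q l"
  using assms q_bij unfolding bij_betw_def by force

lemma mem_ring:
  "1 \<le> i \<Longrightarrow> z \<in> ring X d \<epsilon> v i \<Longrightarrow> z \<in> X \<and> rad \<epsilon> (i - 1) < d v z \<and> d v z \<le> rad \<epsilon> i"
  unfolding ring_def ball_in_def by auto

lemma portal_in_ring:
  assumes "z \<in> Q"
  shows "\<exists>i\<in>{1..L}. \<exists>y\<in>N i. z \<in> P i y \<and> z \<in> ring X d \<epsilon> v i"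
proof -
  obtain i y where i: "i \<in> {1..L}" "y \<in> N i" "z \<in> P i y"
    using assms unfolding portal_set_def by blast
  then have "z \<in> ring X d \<epsilon> v i" using portals_in_cluster[OF i(1,2)] unfolding cluster_def by blast
  then show ?thesis using i by blast
qed

lemma portal_in_shell:
  assumes "z \<in> Q"
  obtains i where "i \<in> {1..L}" "z \<in> X" "rad \<epsilon> (i - 1) < d v z" "d v z \<le> rad \<epsilon> i"
proof -
  obtain i y where "i \<in> {1..L}" "z \<in> ring X d \<epsilon> v i"
    using portal_in_ring[OF assms] by blast
  then show ?thesis using mem_ring[of i z] that by auto
qed

lemma portal_set_subset: "Q \<subseteq> X"
  by (meson portal_in_shell subsetI)

lemma finite_portal_set: "finite Q"
  using portal_set_subset finite_X finite_subset by blast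

lemma dist_sink_portal_gt_1:
  assumes "z \<in> Q"
  shows "1 < d v z"
proof -
  obtain i where "rad \<epsilon> (i - 1) < d v z" using portal_in_shell[OF assms] by blast
  then show ?thesis using one_le_rad[of "i - 1"] by linarith
qed

lemma sink_notin_portal_set: "v \<notin> Q"
  using dist_sink_portal_gt_1 dist_eq_0_iff[OF v_in_X v_in_X] by force

text \<open>Halving the radius r_i = r_(i-1)/\<epsilon> t times, where 2/\<epsilon>^2 \<le> 2^t \<le> 1/\<epsilon>^4, gets
  below the separation \<epsilon> r_(i-1) of the net; this is where the exponent 4 in \<Gamma> comes from.\<close>
lemma card_net_le_Gamma:
  assumes i: "i \<in> {1..L}"
  shows "real (card (N i)) \<le> of_int \<Gamma>"
proof -
  define b where "b = 1 / \<epsilon>"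
  have dim_nonneg: "0 \<le> doubling_dim X d"
    using doubling_dim_nonneg v_in_X by blast
  have b3: "3 \<le> b" using eps_pos eps_le by (simp add: b_def field_simps)
  obtain t where t: "2 * b\<^sup>2 \<le> 2 ^ t" "2 ^ t \<le> b ^ 4"
    using ex_power_of_two_between[OF b3] by blast
  have N_ball: "N i \<subseteq> ball_in X d v (rad \<epsilon> i)"
    using is_net_ring[OF i] mem_ring[of i] i unfolding is_net_def ball_in_def by auto
  have N_sep: "\<forall>y1\<in>N i. \<forall>y2\<in>N i. y1 \<noteq> y2 \<longrightarrow> \<epsilon> * rad \<epsilon> (i - 1) < d y1 y2"
    using is_net_ring[OF i] unfolding is_net_def by blast
  have "rad \<epsilon> i = b * rad \<epsilon> (i - 1)"
    using rad_Suc[of "i - 1"] i by (simp add: b_def)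
  then have "2 * rad \<epsilon> i = 2 * b\<^sup>2 * (\<epsilon> * rad \<epsilon> (i - 1))"
    using eps_pos by (simp add: b_def power2_eq_square)
  also have "\<dots> \<le> 2 ^ t * (\<epsilon> * rad \<epsilon> (i - 1))"
    using t(1) eps_pos one_le_rad[of "i - 1"] by (intro mult_right_mono) auto
  finally have "2 * rad \<epsilon> i / 2 ^ t \<le> \<epsilon> * rad \<epsilon> (i - 1)"
    by (simp add: field_simps)
  then have "real (card (N i)) \<le> 2 powr (real t * doubling_dim X d)"
    by (rule card_separated_le_doubling_dim[OF v_in_X N_ball N_sep])
  also have "\<dots> = (2 ^ t) powr doubling_dim X d"
    by (simp add: powr_powr flip: powr_realpow)
  also have "\<dots> \<le> (b ^ 4) powr doubling_dim X d"
    using t(2) by (rule powr_mono2[OF dim_nonneg, rotated]) simp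
  also have "\<dots> = (1 / \<epsilon>) powr (4 * doubling_dim X d)"
    using eps_pos by (simp add: b_def powr_powr flip: powr_numeral)
  also have "\<dots> = \<epsilon> powr (- 4 * doubling_dim X d)"
    using eps_pos by (simp add: powr_minus_divide powr_divide)
  also have "\<dots> \<le> of_int \<Gamma>"
    unfolding Gamma_def by linarith
  finally show ?thesis .
qed

lemma Gamma_ge_1: "1 \<le> \<Gamma>"
proof -
  have "1 \<le> (1 / \<epsilon>) powr (4 * doubling_dim X d)"
    using eps_pos eps_le doubling_dim_nonneg v_in_X
    by (intro ge_one_powr_ge_zero) (auto simp: field_simps)
  then show ?thesis
    unfolding Gamma_def using eps_pos by (simp add: powr_minus_divide powr_divide)
qed

lemma Gamma_nonneg: "0 \<le> \<Gamma>"
  using Gamma_ge_1 by simp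

lemma card_portals_le:
  assumes "i \<in> {1..L}" and "y \<in> N i"
  shows "finite (P i y) \<and> card (P i y) \<le> k + 1"
proof -
  have "P i y \<subseteq> X"
    using portals_in_cluster[OF assms] mem_ring[of i] assms(1) unfolding cluster_def by auto
  then show ?thesis using portals_in_cluster[OF assms] finite_X finite_subset by auto
qed

definition window :: "nat \<Rightarrow> nat set" where
  "window i = {z \<in> Q. \<epsilon> * rad \<epsilon> (i - 1) < d v z \<and> d v z \<le> rad \<epsilon> i}"

lemma window_subset_two_rings:
  assumes "1 \<le> i"
  shows "window i \<subseteq> (\<Union>i'\<in>{i - 1, i} \<inter> {1..L}. \<Union>y\<in>N i'. P i' y)"
proof
  fix z assume z: "z \<in> window i"
  then have zQ: "z \<in> Q" and lower: "\<epsilon> * rad \<epsilon> (i - 1) < d v z" and upper: "d v z \<le> rad \<epsilon> i"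
    unfolding window_def by auto
  obtain i' y where i': "i' \<in> {1..L}" "y \<in> N i'" "z \<in> P i' y" "z \<in> ring X d \<epsilon> v i'"
    using portal_in_ring[OF zQ] by blast
  have r: "rad \<epsilon> (i' - 1) < d v z" "d v z \<le> rad \<epsilon> i'"
    using mem_ring[OF _ i'(4)] i'(1) by auto
  have "i' - 1 < i"
    using r(1) upper rad_less_rad_iff by (meson order.strict_trans2)
  moreover have "\<epsilon> * rad \<epsilon> (i - 1) < \<epsilon> * rad \<epsilon> (Suc i')"
    using lower r(2) rad_Suc[of i'] eps_pos by simp
  then have "i - 1 < Suc i'"
    using eps_pos rad_less_rad_iff by simp
  ultimately have "i' \<in> {i - 1, i}" using i'(1) assms by auto
  then show "z \<in> (\<Union>i'\<in>{i - 1, i} \<inter> {1..L}. \<Union>y\<in>N i'. P i' y)" using i' by blast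
qed

lemma card_window_le:
  assumes "1 \<le> i"
  shows "card (window i) \<le> 2 * nat \<Gamma> * (k + 1)"
proof -
  let ?I = "{i - 1, i} \<inter> {1..L}"
  have ring_bound: "finite (\<Union>y\<in>N i'. P i' y) \<and> card (\<Union>y\<in>N i'. P i' y) \<le> nat \<Gamma> * (k + 1)"
    if i': "i' \<in> {1..L}" for i'
  proof -
    have "N i' \<subseteq> X"
      using is_net_ring[OF i'] mem_ring[of i'] i' unfolding is_net_def by auto
    then have fin: "finite (N i')"
      using finite_X by (rule finite_subset)
    have "card (\<Union>y\<in>N i'. P i' y) \<le> (\<Sum>y\<in>N i'. card (P i' y))"
      using fin by (rule card_UN_le)
    also have "\<dots> \<le> card (N i') * (k + 1)"
      using sum_mono[of "N i'" "\<lambda>y. card (P i' y)" "\<lambda>_. k + 1"] card_portals_le[OF i'] by simp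
    also have "\<dots> \<le> nat \<Gamma> * (k + 1)"
      using card_net_le_Gamma[OF i'] by (intro mult_right_mono) linarith+
    finally show ?thesis using fin card_portals_le[OF i'] by blast
  qed
  have "card (\<Union>i'\<in>?I. \<Union>y\<in>N i'. P i' y) \<le> (\<Sum>i'\<in>?I. card (\<Union>y\<in>N i'. P i' y))"
    by (rule card_UN_le) simp
  also have "\<dots> \<le> card ?I * (nat \<Gamma> * (k + 1))"
    using sum_mono[of ?I "\<lambda>i'. card (\<Union>y\<in>N i'. P i' y)" "\<lambda>_. nat \<Gamma> * (k + 1)"] ring_bound
    by simp
  also have "\<dots> \<le> 2 * (nat \<Gamma> * (k + 1))"
    using card_mono[of "{i - 1, i}" ?I] card_insert_le_m1[of 2 "{i}" "i - 1"]
    by (intro mult_right_mono) auto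
  finally have "card (\<Union>i'\<in>?I. \<Union>y\<in>N i'. P i' y) \<le> 2 * nat \<Gamma> * (k + 1)" by simp
  moreover have "finite (\<Union>i'\<in>?I. \<Union>y\<in>N i'. P i' y)" using ring_bound by blast
  ultimately show ?thesis
    using window_subset_two_rings[OF assms] by (meson card_mono order_trans)
qed

text \<open>A run of more than 2\<Gamma>(k + 1) consecutive portals cannot fit into one
  window, so the first of them is much closer to the sink than the last.\<close>
lemma dist_le_eps_if_far_before:
  assumes "1 \<le> l'" and "l' + 2 * nat \<Gamma> * (k + 1) \<le> l" and "l \<le> m"
  shows "d v (q l') \<le> \<epsilon> * d v (q l)"
proof (rule ccontr)
  assume far: "\<not> d v (q l') \<le> \<epsilon> * d v (q l)"
  obtain i where i: "i \<in> {1..L}" "rad \<epsilon> (i - 1) < d v (q l)" "d v (q l) \<le> rad \<epsilon> i"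
    using portal_in_shell[OF q_in_portal_set[of l]] assms by auto
  have "q ` {l'..l} \<subseteq> window i"
  proof
    fix z assume "z \<in> q ` {l'..l}"
    then obtain l'' where l'': "l'' \<in> {l'..l}" "z = q l''" by blast
    have "d v (q l') \<le> d v z" "d v z \<le> d v (q l)"
      using q_mono[of l' l''] q_mono[of l'' l] l'' assms by auto
    moreover have "\<epsilon> * rad \<epsilon> (i - 1) < \<epsilon> * d v (q l)" using i(2) eps_pos by simp
    ultimately show "z \<in> window i"
      using far i(3) q_in_portal_set[of l''] l'' assms unfolding window_def by auto
  qed
  moreover have "{l'..l} \<subseteq> {1..m}" using assms(1,3) by auto
  then have "inj_on q {l'..l}" using inj_on_q by (rule inj_on_subset[rotated])
  moreover have "finite (window i)"
    using finite_portal_set unfolding window_def by simp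
  ultimately have "card {l'..l} \<le> card (window i)"
    by (metis card_image card_mono)
  also have "\<dots> \<le> 2 * nat \<Gamma> * (k + 1)" using card_window_le[of i] i(1) by simp
  finally show False using assms(2) by simp
qed

section \<open>Groups of portals and the edges of H_Q\<close>

abbreviation "A \<equiv> Aset Q q k v"
abbreviation "E \<equiv> HQ_edges Q q k \<Gamma> v"

definition block :: "nat \<Rightarrow> int" where
  "block l = (int l - 1) div (int k + 1) + 1"

definition parent :: "int \<Rightarrow> int" where
  "parent j = (j - 2 * \<Gamma>) div 2"

lemma block_bounds:
  assumes "1 \<le> l"
  shows "(block l - 1) * (int k + 1) + 1 \<le> int l" and "int l \<le> block l * (int k + 1)"
    and "1 \<le> block l" and "block l \<le> int l"
proof -
  define D where "D = (int l - 1) div (int k + 1)"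
  define R where "R = (int l - 1) mod (int k + 1)"
  have l: "int l - 1 = D * (int k + 1) + R" unfolding D_def R_def by (rule div_mult_mod_eq[symmetric])
  have R: "0 \<le> R" "R < int k + 1"
    unfolding R_def by (rule pos_mod_sign, simp, rule pos_mod_bound, simp)
  have D: "0 \<le> D" unfolding D_def using assms by (simp add: pos_imp_zdiv_nonneg_iff)
  then have "D \<le> D * (int k + 1)" by (simp add: mult_le_cancel_left1)
  moreover have "block l = D + 1" unfolding block_def D_def by simp
  ultimately show "(block l - 1) * (int k + 1) + 1 \<le> int l" and "int l \<le> block l * (int k + 1)"
    and "1 \<le> block l" and "block l \<le> int l"
    using l R D by (simp_all add: algebra_simps)
qed

lemma block_unique:
  assumes "(j - 1) * (int k + 1) + 1 \<le> int l" and "int l \<le> j * (int k + 1)" and "1 \<le> l"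
  shows "j = block l"
proof -
  have "(j - 1) * (int k + 1) < block l * (int k + 1)"
    using assms(1) block_bounds(2)[OF assms(3)] by linarith
  moreover have "(block l - 1) * (int k + 1) < j * (int k + 1)"
    using assms(2) block_bounds(1)[OF assms(3)] by linarith
  ultimately have "j - 1 < block l" "block l - 1 < j"
    by (simp_all add: mult_less_cancel_right)
  then show ?thesis by simp
qed

lemma mem_Aset_iff:
  "1 \<le> j \<Longrightarrow> a \<in> A j \<longleftrightarrow> (\<exists>l. a = q l \<and> (j - 1) * (int k + 1) + 1 \<le> int l \<and>
     int l \<le> j * (int k + 1) \<and> 1 \<le> l \<and> l \<le> m)"
  unfolding Aset_def by auto

lemma Aset_nonpos: "j \<le> 0 \<Longrightarrow> A j = {v}"
  unfolding Aset_def by simp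

lemma Aset_subset: "1 \<le> j \<Longrightarrow> A j \<subseteq> Q"
  using mem_Aset_iff q_in_portal_set by fastforce

lemma finite_Aset: "finite (A j)"
  using Aset_nonpos[of j] Aset_subset[of j] finite_portal_set
  by (cases "j \<le> 0") (auto intro: finite_subset)

lemma block_eq_if_mem_Aset:
  assumes "1 \<le> j" and "q l \<in> A j" and "1 \<le> l" and "l \<le> m"
  shows "block l = j"
proof -
  obtain l' where l': "q l = q l'" "(j - 1) * (int k + 1) + 1 \<le> int l'" "int l' \<le> j * (int k + 1)"
      "1 \<le> l'" "l' \<le> m"
    using mem_Aset_iff[OF assms(1)] assms(2) by blast
  then have "l = l'" using inj_onD[OF inj_on_q] assms(3,4) by simp
  then show ?thesis using block_unique[OF l'(2-4)] by simp
qed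

lemma q_mem_Aset_block: "1 \<le> l \<Longrightarrow> l \<le> m \<Longrightarrow> q l \<in> A (block l)"
  using block_bounds[of l] mem_Aset_iff[of "block l" "q l"] by auto

lemma card_Aset_le: "card (A j) \<le> k + 1"
proof (cases "j \<le> 0")
  case True
  then show ?thesis using Aset_nonpos by simp
next
  case False
  let ?I = "{(j - 1) * (int k + 1) + 1 .. j * (int k + 1)}"
  have "A j \<subseteq> (q \<circ> nat) ` ?I"
  proof
    fix a assume "a \<in> A j"
    then obtain l where l: "a = q l" "int l \<in> ?I" using mem_Aset_iff[of j a] False by auto
    then show "a \<in> (q \<circ> nat) ` ?I" by (intro image_eqI[of _ _ "int l"]) auto
  qed
  then have "card (A j) \<le> card ?I"
    by (meson card_image_le card_mono finite_atLeastAtMost_int finite_imageI order_trans)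
  then show ?thesis by (simp add: algebra_simps)
qed

lemma parent_eq_ceiling: "\<lceil>real_of_int (j - 2 * \<Gamma> - 1) / 2\<rceil> = parent j"
proof -
  have "\<lceil>real_of_int (j - 2 * \<Gamma> - 1) / 2\<rceil> = - (- (j - 2 * \<Gamma> - 1) div 2)"
    using ceiling_divide_eq_div[of "j - 2 * \<Gamma> - 1" 2] by simp
  then show ?thesis unfolding parent_def by linarith
qed

lemma parent_bounds: "2 * parent j \<le> j - 2 * \<Gamma>" "j - 2 * \<Gamma> \<le> 2 * parent j + 1"
  unfolding parent_def by linarith+

lemma mem_HQ_edges_iff:
  "e \<in> E \<longleftrightarrow> (\<exists>a b j. e = {a, b} \<and> 1 \<le> j \<and> A j \<noteq> {} \<and> a \<in> A j \<and> b \<in> A (parent j))"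
  unfolding HQ_edges_def parent_eq_ceiling by blast

lemma edge_to_parent_block:
  assumes "1 \<le> l" and "l \<le> m" and "b \<in> A (parent (block l))"
  shows "{b, q l} \<in> E"
  unfolding mem_HQ_edges_iff
  using q_mem_Aset_block[OF assms(1,2)] assms(3) block_bounds(3)[OF assms(1)]
  by (intro exI[of _ "q l"] exI[of _ b] exI[of _ "block l"]) (auto simp: insert_commute)


text \<open>The k + 1 portals of a group cannot all be deleted by a fault set of size k.\<close>
lemma surviving_portal_in_parent:
  assumes S: "S \<subseteq> Q" "card S \<le> k" and l: "1 \<le> l" "l \<le> m" and parent_pos: "1 \<le> parent (block l)"
  obtains l' where "1 \<le> l'" and "l' + 2 * nat \<Gamma> * (k + 1) < l" and "q l' \<notin> S"
    and "q l' \<in> A (parent (block l))" and "block l' = parent (block l)"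
proof -
  define J where "J = parent (block l)"
  define lo where "lo = (J - 1) * (int k + 1) + 1"
  define hi where "hi = J * (int k + 1)"
  define I where "I = nat ` {lo..hi}"
  have "J \<le> block l - 2 * \<Gamma> - 1"
    using parent_bounds(1)[of "block l"] parent_pos unfolding J_def by linarith
  then have "hi \<le> (block l - 2 * \<Gamma> - 1) * (int k + 1)"
    unfolding hi_def by (intro mult_right_mono) auto
  then have far: "hi + 2 * \<Gamma> * (int k + 1) < int l"
    using block_bounds(1)[OF l(1)] by (simp add: algebra_simps)
  have lo: "1 \<le> lo" using parent_pos unfolding lo_def J_def by simp
  have I: "1 \<le> l' \<and> l' + 2 * nat \<Gamma> * (k + 1) < l \<and> lo \<le> int l' \<and> int l' \<le> hi"
    if l'I: "l' \<in> I" for l'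
  proof -
    obtain x where x: "lo \<le> x" "x \<le> hi" "l' = nat x" using l'I unfolding I_def by auto
    then have l': "int l' = x" using lo by simp
    have "int (2 * nat \<Gamma> * (k + 1)) = 2 * \<Gamma> * (int k + 1)"
      by (simp add: Gamma_nonneg algebra_simps)
    then have "int (l' + 2 * nat \<Gamma> * (k + 1)) < int l" using l' x(2) far by simp
    then show ?thesis using l' x lo by linarith
  qed
  have "inj_on nat {lo..hi}" using lo by (intro inj_onI) auto
  then have "card I = card {lo..hi}" unfolding I_def by (rule card_image)
  also have "\<dots> = k + 1" unfolding lo_def hi_def by (simp add: algebra_simps)
  finally have card_I: "card I = k + 1" .
  have "I \<subseteq> {1..m}"
  proof
    fix l' assume "l' \<in> I"
    then show "l' \<in> {1..m}" using I[of l'] l(2) by simp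
  qed
  then have "card (q ` I) = k + 1"
    using card_image[OF inj_on_subset[OF inj_on_q]] card_I by simp
  moreover have "finite S" using S(1) finite_portal_set finite_subset by blast
  ultimately have "\<not> q ` I \<subseteq> S" using S(2) card_mono[of S "q ` I"] by linarith
  then obtain l' where l': "l' \<in> I" "q l' \<notin> S" by blast
  note l'_bounds = I[OF l'(1)]
  have J1: "1 \<le> J" using parent_pos unfolding J_def .
  have "block l' = J"
    using block_unique[of J l'] l'_bounds unfolding lo_def hi_def by simp
  moreover have "q l' \<in> A J"
    unfolding mem_Aset_iff[OF J1] using l'_bounds l(2) unfolding lo_def hi_def
    by (intro exI[of _ l']) simp
  ultimately show ?thesis using that l'_bounds l'(2) unfolding J_def by blast
qed

text \<open>Induction along the enumeration: the path to x = q l extends the path to a surviving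
  portal y of the parent group, and d(v, y) \<le> \<epsilon> d(v, x) keeps the stretch at 1 + 3\<epsilon>
  (lemma stretch_after_step).\<close>
lemma fault_tolerant_path:
  assumes S: "S \<subseteq> Q" "card S \<le> k"
  shows "1 \<le> l \<Longrightarrow> l \<le> m \<Longrightarrow> q l \<notin> S \<Longrightarrow>
    \<exists>p. is_path (insert v Q - S) (del_vertices_E E S) p v (q l) \<and>
        path_weight d p \<le> (1 + 3 * \<epsilon>) * d v (q l) \<and>
        (\<forall>z\<in>set p. d v z \<le> d v (q l)) \<and> 2 ^ (length p - 1) \<le> 2 * block l"
proof (induction l rule: less_induct)
  case (less l)
  define x where "x = q l"
  define g where "g = block l"
  have xQ: "x \<in> Q" using q_in_portal_set less.prems unfolding x_def by simp
  have xX: "x \<in> X" using xQ portal_set_subset by blast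
  have dx: "0 < d v x" using dist_sink_portal_gt_1[OF xQ] by simp
  have g1: "1 \<le> g" using block_bounds(3)[OF less.prems(1)] unfolding g_def .
  have vS: "v \<notin> S" using sink_notin_portal_set S(1) by blast
  have edge: "{b, x} \<in> del_vertices_E E S" if "b \<in> A (parent g)" "b \<notin> S" for b
    using edge_to_parent_block[OF less.prems(1,2)] that less.prems(3)
    unfolding x_def g_def del_vertices_E_def by auto
  show ?case
  proof (cases "parent g \<le> 0")
    case True
    have "is_path (insert v Q - S) (del_vertices_E E S) ([v] @ [x]) v x"
      using is_path_singleton[of v] edge[of v] Aset_nonpos[OF True] xQ sink_notin_portal_set
        less.prems(3) vS unfolding x_def by (intro is_path_snoc) auto
    moreover have "path_weight d ([v] @ [x]) = d v x"
      by (simp add: path_weight_def)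
    ultimately show ?thesis
      using dist_eq_0_iff[OF v_in_X v_in_X] dx eps_pos g1 unfolding x_def[symmetric] g_def[symmetric]
      by (intro exI[of _ "[v] @ [x]"]) auto
  next
    case False
    obtain l' where l': "1 \<le> l'" "l' + 2 * nat \<Gamma> * (k + 1) < l" "q l' \<notin> S"
        "q l' \<in> A (parent g)" "block l' = parent g"
      using surviving_portal_in_parent[OF S less.prems(1,2)] False unfolding g_def by auto
    define y where "y = q l'"
    have "l' < l" using l'(2) by simp
    have yQ: "y \<in> Q" using q_in_portal_set l'(1) \<open>l' < l\<close> less.prems(2) unfolding y_def by simp
    have yX: "y \<in> X" using yQ portal_set_subset by blast
    have dy: "d v y \<le> \<epsilon> * d v x"
      using dist_le_eps_if_far_before[OF l'(1) _ less.prems(2)] l'(2) unfolding x_def y_def by simp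
    have "\<epsilon> * d v x < d v x" using dx eps_le by simp
    then have dyx: "d v y < d v x" using dy by linarith
    obtain p where p: "is_path (insert v Q - S) (del_vertices_E E S) p v y"
        "path_weight d p \<le> (1 + 3 * \<epsilon>) * d v y" "\<forall>z\<in>set p. d v z \<le> d v y"
        "2 ^ (length p - 1) \<le> 2 * block l'"
      using less.IH[OF \<open>l' < l\<close> l'(1)] \<open>l' < l\<close> less.prems(2) l'(3) unfolding y_def by auto
    have p_ne: "p \<noteq> []" "last p = y" using p(1) unfolding is_path_def by auto
    have "is_path (insert v Q - S) (del_vertices_E E S) (p @ [x]) v x"
      using p(1) xQ less.prems(3) p(3) dyx edge[OF l'(4) l'(3)] p_ne(2)
      unfolding x_def y_def by (intro is_path_snoc) auto
    moreover have "path_weight d (p @ [x]) \<le> (1 + 3 * \<epsilon>) * d v x"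
    proof -
      have "d y x \<le> d v y + d v x"
        using dist_triangle[OF yX v_in_X xX] dist_commute[OF yX v_in_X] by simp
      then show ?thesis
        using path_weight_snoc[OF p_ne(1)] p_ne(2) p(2) dy eps_pos eps_le dx
        by (simp add: stretch_after_step)
    qed
    moreover have "2 ^ (length (p @ [x]) - 1) \<le> 2 * g"
    proof -
      have len: "length (p @ [x]) - 1 = Suc (length p - 1)" using p_ne(1) by (cases p) auto
      have "(2::int) ^ (length (p @ [x]) - 1) = 2 * 2 ^ (length p - 1)"
        by (simp only: len power_Suc)
      also have "\<dots> \<le> 4 * parent g" using p(4) l'(5) by simp
      also have "\<dots> \<le> 2 * g" using parent_bounds(1)[of g] Gamma_ge_1 by linarith
      finally show ?thesis .
    qed
    moreover have "\<forall>z\<in>set (p @ [x]). d v z \<le> d v x" using p(3) dyx by auto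
    ultimately show ?thesis unfolding x_def[symmetric] g_def[symmetric] by blast
  qed
qed

lemma graph_dist_del_vertices_le:
  assumes "S \<subseteq> Q" and "card S \<le> k" and "x \<in> Q - S"
  shows "graph_dist (del_vertices_V (insert v Q) S) (del_vertices_E E S) d v x
           \<le> ereal ((1 + 3 * \<epsilon>) * d v x)"
proof -
  obtain l where l: "1 \<le> l" "l \<le> m" "x = q l"
    using assms(3) portal_setE by blast
  then obtain p where p: "is_path (insert v Q - S) (del_vertices_E E S) p v x"
      "path_weight d p \<le> (1 + 3 * \<epsilon>) * d v x"
    using fault_tolerant_path[OF assms(1,2) l(1,2)] assms(3) by auto
  have "graph_dist (del_vertices_V (insert v Q) S) (del_vertices_E E S) d v x
          \<le> ereal (path_weight d p)"
    using p(1) unfolding del_vertices_V_def by (rule graph_dist_le_path_weight)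
  also have "\<dots> \<le> ereal ((1 + 3 * \<epsilon>) * d v x)" using p(2) by simp
  finally show ?thesis .
qed

lemma short_path_log_hops:
  assumes "3 \<le> card X" and "x \<in> Q"
  shows "\<exists>p. is_path (insert v Q) E p v x \<and> path_weight d p \<le> (1 + 3 * \<epsilon>) * d v x \<and>
           real (length p - 1) \<le> 3 * ln (real (card X))"
proof -
  obtain l where l: "1 \<le> l" "l \<le> m" "x = q l"
    using assms(2) portal_setE by blast
  have no_faults: "del_vertices_E E {} = E" unfolding del_vertices_E_def by simp
  obtain p where p: "is_path (insert v Q) E p v x" "path_weight d p \<le> (1 + 3 * \<epsilon>) * d v x"
      "2 ^ (length p - 1) \<le> 2 * block l"
    using fault_tolerant_path[of "{}" l] l no_faults by auto
  have "m \<le> card X" using portal_set_subset finite_X by (rule card_mono[rotated])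
  then have "int (2 ^ (length p - 1)) \<le> int (2 * card X)"
    using p(3) block_bounds(4)[OF l(1)] l(2) by simp
  then have "real (length p - 1) \<le> 3 * ln (real (card X))"
    using assms(1) by (intro le_three_ln_if_two_power_le) (simp_all only: of_nat_le_iff)
  then show ?thesis using p(1,2) by blast
qed

lemma neighbours_of_sink: "{w. {v, w} \<in> E} \<subseteq> q ` {1..(2 * nat \<Gamma> + 1) * (k + 1)}"
proof
  fix w assume "w \<in> {w. {v, w} \<in> E}"
  then obtain a b j where e: "{v, w} = {a, b}" "1 \<le> j" "a \<in> A j" "b \<in> A (parent j)"
    unfolding mem_HQ_edges_iff by blast
  have "a \<in> Q" using Aset_subset[OF e(2)] e(3) by blast
  then have "w = a" "b = v" using e(1) sink_notin_portal_set by (auto simp: doubleton_eq_iff)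
  then have "parent j \<le> 0" using Aset_subset[of "parent j"] e(4) sink_notin_portal_set by force
  then have "j * (int k + 1) \<le> (2 * \<Gamma> + 1) * (int k + 1)"
    using parent_bounds(2)[of j] by (intro mult_right_mono) auto
  moreover obtain l where l: "a = q l" "int l \<le> j * (int k + 1)" "1 \<le> l"
    using mem_Aset_iff[OF e(2)] e(3) by blast
  moreover have "int ((2 * nat \<Gamma> + 1) * (k + 1)) = (2 * \<Gamma> + 1) * (int k + 1)"
    by (simp add: Gamma_nonneg algebra_simps)
  ultimately have "int l \<le> int ((2 * nat \<Gamma> + 1) * (k + 1))" by linarith
  then have "l \<in> {1..(2 * nat \<Gamma> + 1) * (k + 1)}"
    using \<open>1 \<le> l\<close> by (simp only: atLeastAtMost_iff of_nat_le_iff)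
  then show "w \<in> q ` {1..(2 * nat \<Gamma> + 1) * (k + 1)}" using l(1) \<open>w = a\<close> by blast
qed

lemma neighbours_of_portal:
  assumes "1 \<le> l" and "l \<le> m"
  shows "{w. {q l, w} \<in> E} \<subseteq>
           A (parent (block l)) \<union> A (2 * block l + 2 * \<Gamma>) \<union> A (2 * block l + 2 * \<Gamma> + 1)"
proof
  fix w assume "w \<in> {w. {q l, w} \<in> E}"
  then obtain a b j where e: "{q l, w} = {a, b}" "1 \<le> j" "a \<in> A j" "b \<in> A (parent j)"
    unfolding mem_HQ_edges_iff by blast
  consider "q l = a" "w = b" | "q l = b" "w = a" using e(1) by (auto simp: doubleton_eq_iff)
  then show "w \<in> A (parent (block l)) \<union> A (2 * block l + 2 * \<Gamma>) \<union> A (2 * block l + 2 * \<Gamma> + 1)"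
  proof cases
    case 1
    then have "block l = j" using block_eq_if_mem_Aset[OF e(2) _ assms] e(3) by simp
    then show ?thesis using 1 e(4) by blast
  next
    case 2
    have "1 \<le> parent j"
      using Aset_nonpos[of "parent j"] e(4) 2 q_in_portal_set[OF assms] sink_notin_portal_set
      by (cases "parent j \<le> 0") auto
    then have "block l = parent j" using block_eq_if_mem_Aset[OF _ _ assms] e(4) 2 by simp
    then have "j = 2 * block l + 2 * \<Gamma> \<or> j = 2 * block l + 2 * \<Gamma> + 1"
      using parent_bounds[of j] by linarith
    then show ?thesis using 2 e(3) by blast
  qed
qed

lemma degree_HQ_le:
  assumes "u \<in> insert v Q"
  shows "degree E u \<le> (2 * nat \<Gamma> + 1) * (k + 1)"
proof (cases "u = v")
  case True
  have "degree E u \<le> card (q ` {1..(2 * nat \<Gamma> + 1) * (k + 1)})"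
    unfolding degree_def True using neighbours_of_sink by (rule card_mono[rotated]) simp
  also have "\<dots> \<le> (2 * nat \<Gamma> + 1) * (k + 1)"
    using card_image_le[of "{1..(2 * nat \<Gamma> + 1) * (k + 1)}" q] by simp
  finally show ?thesis .
next
  case False
  then obtain l where l: "1 \<le> l" "l \<le> m" "u = q l"
    using assms portal_setE by blast
  let ?g = "block l"
  have "degree E u \<le> card (A (parent ?g) \<union> A (2 * ?g + 2 * \<Gamma>) \<union> A (2 * ?g + 2 * \<Gamma> + 1))"
    unfolding degree_def l(3) using neighbours_of_portal[OF l(1,2)]
    by (rule card_mono[rotated]) (simp add: finite_Aset)
  also have "\<dots> \<le> card (A (parent ?g)) + card (A (2 * ?g + 2 * \<Gamma>)) + card (A (2 * ?g + 2 * \<Gamma> + 1))"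
    by (meson card_Un_le add_le_mono le_refl order_trans)
  also have "\<dots> \<le> 3 * (k + 1)"
    by (rule order_trans[OF add_mono[OF add_mono[OF card_Aset_le card_Aset_le] card_Aset_le]]) simp
  also have "\<dots> \<le> (2 * nat \<Gamma> + 1) * (k + 1)"
    using Gamma_ge_1 by (intro mult_right_mono) auto
  finally show ?thesis .
qed

lemma degree_HQ_le_six_Gamma_k:
  assumes "1 \<le> k" and "u \<in> insert v Q"
  shows "real (degree E u) \<le> 6 * real_of_int \<Gamma> * real k"
proof -
  have "1 \<le> nat \<Gamma>" using Gamma_ge_1 by simp
  then have "nat \<Gamma> \<le> nat \<Gamma> * k" "k \<le> nat \<Gamma> * k" "1 \<le> nat \<Gamma> * k"
    using assms(1) by simp_all
  moreover have "(2 * nat \<Gamma> + 1) * (k + 1) = 2 * (nat \<Gamma> * k) + 2 * nat \<Gamma> + k + 1"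
    by (simp add: algebra_simps)
  ultimately have "degree E u \<le> 6 * nat \<Gamma> * k" using degree_HQ_le[OF assms(2)] by linarith
  then have "real (degree E u) \<le> 6 * real (nat \<Gamma>) * real k"
    using of_nat_mono by fastforce
  then show ?thesis using Gamma_nonneg by simp
qed

end

theorem lemma11:
  shows "\<exists>c1 c2 :: real. \<forall>(X :: nat set) (d :: nat \<Rightarrow> nat \<Rightarrow> real) (k :: nat) (\<epsilon> :: real) (v :: nat)
      N cl P q.
    finite X \<and> metric_on X d \<and> (\<forall>x\<in>X. \<forall>y\<in>X. x \<noteq> y \<longrightarrow> d x y > 1) \<and>
    1 \<le> k \<and> k + 2 \<le> card X \<and> 0 < \<epsilon> \<and> \<epsilon> \<le> 1/3 \<and> v \<in> X \<and>
    valid_construction X d k \<epsilon> v N cl P q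
    \<longrightarrow>
    (let Q = portal_set X d \<epsilon> N P;
         V = insert v Q;
         E = HQ_edges Q q k (Gamma X d \<epsilon>) v
     in (\<forall>S. S \<subseteq> Q \<and> card S \<le> k \<longrightarrow>
           (\<forall>x\<in>Q - S. graph_dist (del_vertices_V V S) (del_vertices_E E S) d v x
                         \<le> ereal ((1 + 3 * \<epsilon>) * d v x))) \<and>
        (\<forall>u\<in>V. real (degree E u) \<le> c1 * real_of_int (Gamma X d \<epsilon>) * real k) \<and>
        (\<forall>x\<in>Q. \<exists>p. is_path V E p v x \<and> path_weight d p \<le> (1 + 3 * \<epsilon>) * d v x \<and>
                    real (length p - 1) \<le> c2 * ln (real (card X))))"
proof (rule exI[of _ 6], rule exI[of _ 3], intro allI impI)
  fix X d k \<epsilon> v N cl P q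
  assume H: "finite X \<and> metric_on X d \<and> (\<forall>x\<in>X. \<forall>y\<in>X. x \<noteq> y \<longrightarrow> d x y > 1) \<and>
    1 \<le> k \<and> k + 2 \<le> card X \<and> 0 < \<epsilon> \<and> \<epsilon> \<le> 1/3 \<and> v \<in> X \<and>
    valid_construction X d k \<epsilon> v N cl P q"
  then interpret c: portal_construction X d k \<epsilon> v N cl P q
    by unfold_locales auto
  have "1 \<le> k" "3 \<le> card X" using H by auto
  then show "let Q = portal_set X d \<epsilon> N P;
         V = insert v Q;
         E = HQ_edges Q q k (Gamma X d \<epsilon>) v
     in (\<forall>S. S \<subseteq> Q \<and> card S \<le> k \<longrightarrow>
           (\<forall>x\<in>Q - S. graph_dist (del_vertices_V V S) (del_vertices_E E S) d v x
                         \<le> ereal ((1 + 3 * \<epsilon>) * d v x))) \<and>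
        (\<forall>u\<in>V. real (degree E u) \<le> 6 * real_of_int (Gamma X d \<epsilon>) * real k) \<and>
        (\<forall>x\<in>Q. \<exists>p. is_path V E p v x \<and> path_weight d p \<le> (1 + 3 * \<epsilon>) * d v x \<and>
                    real (length p - 1) \<le> 3 * ln (real (card X)))"
    unfolding Let_def
    using c.graph_dist_del_vertices_le c.degree_HQ_le_six_Gamma_k c.short_path_log_hops by blast
qed

end
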